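(* Let $n,m\in\mathbb{N}$ and $b<0$. Then $\mathcal{NN}^{\mathrm{modReLU}_b}_{n,m,2n+2m+1}$ is universal, where $\mathrm{modReLU}_b:\mathbb{C}\to\mathbb{C}$, $\mathrm{modReLU}_b(z)=(|z|+b)\frac{z}{|z|}$ if $|z|+b\ge0$ and $\mathrm{modReLU}_b(z)=0$ otherwise.
   Context: For $\varrho:\mathbb{C}\to\mathbb{C}$ and $n,m,W\in\mathbb{N}$, $\mathcal{NN}^\varrho_{n,m,W}$ denotes the set of all functions $\mathbb{C}^n\to\mathbb{C}^m$ of the form $V_L\circ\varrho^{\times W}\circ V_{L-1}\circ\cdots\circ\varrho^{\times W}\circ V_1$ with arbitrary depth $L\ge 2$, where $V_1:\mathbb{C}^n\to\mathbb{C}^W$, $V_2,\dots,V_{L-1}:\mathbb{C}^W\to\mathbb{C}^W$, $V_L:\mathbb{C}^W\to\mathbb{C}^m$ are $\mathbb{C}$-affine maps ($z\mapsto Az+b$ with complex $A,b$) and $\varrho^{\times W}$ applies $\varrho$ componentwise. A class $\mathcal{F}\subseteq C(\mathbb{C}^n;\mathbb{C}^m)$ is universal if for every $g\in C(\mathbb{C}^n;\mathbb{C}^m)$, compact $K\subseteq\mathbb{C}^n$ and $\varepsilon>0$ there is $f\in\mathcal{F}$ with $\sup_{z\in K}\|f(z)-g(z)\|<\varepsilon$. *)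

theory Defs
  imports "HOL-Analysis.Analysis"
begin

text \<open>Input space C^n is complex^'n, output space C^m is complex^'m (n = CARD('n), m = CARD('m)).
  Hidden layers of width W are represented as functions nat => complex, of which only the
  coordinates 0..<W are meaningful (affine maps set the others to 0 and only read indices < W).\<close>

definition in_affine :: "nat \<Rightarrow> (nat \<Rightarrow> 'n::finite \<Rightarrow> complex) \<Rightarrow> (nat \<Rightarrow> complex)
    \<Rightarrow> complex^'n \<Rightarrow> nat \<Rightarrow> complex" where
  "in_affine W A c = (\<lambda>x i. if i < W then (\<Sum>j\<in>UNIV. A i j * x $ j) + c i else 0)"

definition hid_affine :: "nat \<Rightarrow> (nat \<Rightarrow> nat \<Rightarrow> complex) \<Rightarrow> (nat \<Rightarrow> complex)
    \<Rightarrow> (nat \<Rightarrow> complex) \<Rightarrow> nat \<Rightarrow> complex" where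
  "hid_affine W A c = (\<lambda>z i. if i < W then (\<Sum>j<W. A i j * z j) + c i else 0)"

definition out_affine :: "nat \<Rightarrow> ('m::finite \<Rightarrow> nat \<Rightarrow> complex) \<Rightarrow> ('m \<Rightarrow> complex)
    \<Rightarrow> (nat \<Rightarrow> complex) \<Rightarrow> complex^'m" where
  "out_affine W A c = (\<lambda>z. \<chi> k. (\<Sum>j<W. A k j * z j) + c k)"

definition act :: "(complex \<Rightarrow> complex) \<Rightarrow> (nat \<Rightarrow> complex) \<Rightarrow> nat \<Rightarrow> complex" where
  "act \<rho> = (\<lambda>z i. \<rho> (z i))"

inductive_set NN_pre :: "(complex \<Rightarrow> complex) \<Rightarrow> nat \<Rightarrow> (complex^'n::finite \<Rightarrow> nat \<Rightarrow> complex) set"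
  for \<rho> :: "complex \<Rightarrow> complex" and W :: nat where
  first: "in_affine W A c \<in> NN_pre \<rho> W"
| step: "g \<in> NN_pre \<rho> W \<Longrightarrow> hid_affine W A c \<circ> act \<rho> \<circ> g \<in> NN_pre \<rho> W"

text \<open>The class NN^rho_{n,m,W}: V_L o rho o V_{L-1} o ... o rho o V_1 with L >= 2.\<close>
definition NN :: "(complex \<Rightarrow> complex) \<Rightarrow> nat \<Rightarrow> (complex^'n::finite \<Rightarrow> complex^'m::finite) set" where
  "NN \<rho> W = {out_affine W A c \<circ> act \<rho> \<circ> g | A c g. g \<in> NN_pre \<rho> W}"

definition universal :: "(complex^'n::finite \<Rightarrow> complex^'m::finite) set \<Rightarrow> bool" where
  "universal F \<longleftrightarrow> (\<forall>g. continuous_on UNIV g \<longrightarrow>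
     (\<forall>K. compact K \<longrightarrow> (\<forall>\<epsilon>>0. \<exists>f\<in>F. \<forall>z\<in>K. norm (f z - g z) < \<epsilon>)))"

definition modReLU :: "real \<Rightarrow> complex \<Rightarrow> complex" where
  "modReLU b z = (if cmod z + b \<ge> 0 then complex_of_real (cmod z + b) * (z / complex_of_real (cmod z)) else 0)"

end

theory Submission
  imports Defs
begin

text \<open>With r = -b > 0, the activation modReLU (-r) is 3-Lipschitz, so a network whose hidden
  states are uniformly close on K to a target state can be extended by further layers without losing
  that closeness. Real numbers in [-B, B] are stored in hidden nodes with an offset: shifted above r,
  modReLU (-r) merely subtracts r, and squeezed into [0, 2r] it acts as a ReLU. Hence one layer
  performs an affine update of a stored coordinate, and two layers store the minimum or maximum of two
  coordinates, using one spare node T as scratch register.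

  The first layer recovers the real and imaginary parts of each input coordinate w approximately: for
  large C, modReLU (-r) (C + w) = C + w - r (1 + i Im w / C) + O(|w|^2 / C), so comparing the
  shifts C and 2 C isolates Im w, and then Re w. Each real coordinate of the target g is uniformly
  approximated on K by a maximum of finitely many cones \<phi>(c) - L |x - c|, with |.| the maximum
  norm of the real coordinates; such a cone is a minimum of 2n + 1 affine functions. So the 2n + 2m + 1
  nodes hold the 2n input coordinates, the 2m output coordinates and the scratch register, and the
  final affine map reads the outputs as m complex numbers.\<close>

section \<open>The activation modReLU\<close>

lemma modReLU_eq_shift:
  assumes "0 < r" "r \<le> cmod z"
  shows "modReLU (-r) z = z - of_real r * sgn z"
proof -
  have "z \<noteq> 0" using assms by auto
  then show ?thesis using assms by (simp add: modReLU_def sgn_eq algebra_simps)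
qed

lemma modReLU_eq_0: "cmod z < r \<Longrightarrow> modReLU (-r) z = 0"
  by (simp add: modReLU_def)

lemma modReLU_of_nonneg:
  assumes "0 \<le> p" "0 < r"
  shows "modReLU (-r) (of_real p) = of_real (max (p - r) 0)"
  using assms by (cases "p = 0") (auto simp: modReLU_def)

lemma norm_sgn_diff_le:
  assumes "z \<noteq> 0" "w \<noteq> 0"
  shows "cmod (sgn z - sgn w) \<le> 2 * cmod (z - w) / cmod z"
proof -
  have split: "sgn z - sgn w = (z - w) / of_real (cmod z) + w * of_real (1 / cmod z - 1 / cmod w)"
    using assms by (simp add: sgn_eq field_simps)
  have "cmod (w * of_real (1 / cmod z - 1 / cmod w)) = cmod w * \<bar>1 / cmod z - 1 / cmod w\<bar>"
    by (metis norm_mult norm_of_real)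
  also have "\<dots> = \<bar>cmod w - cmod z\<bar> / cmod z"
    using assms by (simp add: field_simps abs_div abs_mult)
  also have "\<dots> \<le> cmod (z - w) / cmod z"
    by (rule divide_right_mono) (metis norm_triangle_ineq3 norm_minus_commute, simp)
  finally have "cmod (w * of_real (1 / cmod z - 1 / cmod w)) \<le> cmod (z - w) / cmod z" .
  moreover have "cmod ((z - w) / of_real (cmod z)) = cmod (z - w) / cmod z"
    by (simp add: norm_divide)
  ultimately show ?thesis
    unfolding split using norm_triangle_ineq[of "(z - w) / of_real (cmod z)" "w * of_real (1 / cmod z - 1 / cmod w)"]
    by linarith
qed

lemma modReLU_lipschitz:
  assumes "0 < r"
  shows "3-lipschitz_on UNIV (modReLU (-r))"
proof (rule lipschitz_onI)
  have big: "cmod (modReLU (-r) z - modReLU (-r) w) \<le> 3 * cmod (z - w)"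
    if z: "r \<le> cmod z" for z w
  proof (cases "r \<le> cmod w")
    case w: True
    have nz: "z \<noteq> 0" "w \<noteq> 0" using z w assms by auto
    have "modReLU (-r) z - modReLU (-r) w = (z - w) - of_real r * (sgn z - sgn w)"
      using z w assms by (simp add: modReLU_eq_shift algebra_simps)
    also have "cmod \<dots> \<le> cmod (z - w) + r * (2 * cmod (z - w) / cmod z)"
      using norm_triangle_ineq4 norm_sgn_diff_le[OF nz] assms
      by (smt (verit) mult_left_mono norm_mult norm_of_real)
    also have "r * (2 * cmod (z - w) / cmod z) \<le> 2 * cmod (z - w)"
      using z nz by (simp add: field_simps mult_right_mono)
    finally show ?thesis by simp
  next
    case w: False
    have "modReLU (-r) z = of_real (cmod z + - r) * (z / of_real (cmod z))"
      using z by (simp add: modReLU_def)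
    then have "cmod (modReLU (-r) z) = \<bar>cmod z - r\<bar> * (cmod z / cmod z)"
      by (metis norm_mult norm_of_real norm_divide abs_norm_cancel diff_conv_add_uminus)
    then have "cmod (modReLU (-r) z) = cmod z - r"
      using z assms by (cases "z = 0") auto
    then show ?thesis using w modReLU_eq_0[of w r] norm_triangle_ineq3[of z w] by simp
  qed
  fix z w :: complex
  consider "r \<le> cmod z" | "r \<le> cmod w" | "cmod z < r" "cmod w < r" by linarith
  then show "dist (modReLU (-r) z) (modReLU (-r) w) \<le> 3 * dist z w"
  proof cases
    case 2 then show ?thesis using big[of w z] by (simp add: dist_norm norm_minus_commute)
  qed (use big in \<open>auto simp: dist_norm modReLU_eq_0\<close>)
qed simp

section \<open>Approximating hidden states\<close>

lemma norm_vec_le_sum: "norm (x :: 'a::real_normed_vector^'m) \<le> (\<Sum>i\<in>UNIV. norm (x $ i))"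
  unfolding norm_vec_def by (rule L2_set_le_sum) auto

definition hidden_dist :: "nat \<Rightarrow> (nat \<Rightarrow> complex) \<Rightarrow> (nat \<Rightarrow> complex) \<Rightarrow> real" where
  "hidden_dist W u v = (\<Sum>i<W. cmod (u i - v i))"

definition approximable :: "(complex \<Rightarrow> complex) \<Rightarrow> nat \<Rightarrow> (complex^'n::finite) set
    \<Rightarrow> (complex^'n \<Rightarrow> nat \<Rightarrow> complex) \<Rightarrow> bool" where
  "approximable \<rho> W K h \<longleftrightarrow> (\<forall>e>0. \<exists>g\<in>NN_pre \<rho> W. \<forall>x\<in>K. hidden_dist W (g x) (h x) < e)"

lemma norm_le_hidden_dist: "j < W \<Longrightarrow> cmod (u j - v j) \<le> hidden_dist W u v"
  unfolding hidden_dist_def by (rule member_le_sum) auto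

lemma approximable_cong:
  "approximable \<rho> W K h \<Longrightarrow> (\<And>x. x \<in> K \<Longrightarrow> h x = h' x) \<Longrightarrow> approximable \<rho> W K h'"
  unfolding approximable_def by metis

lemma norm_linear_act_diff_le:
  assumes "C-lipschitz_on UNIV \<rho>"
  shows "cmod ((\<Sum>j<W. a j * act \<rho> u j) - (\<Sum>j<W. a j * act \<rho> v j))
    \<le> C * (\<Sum>j<W. cmod (a j)) * hidden_dist W u v"
proof -
  have "cmod ((\<Sum>j<W. a j * act \<rho> u j) - (\<Sum>j<W. a j * act \<rho> v j))
      = cmod (\<Sum>j<W. a j * (\<rho> (u j) - \<rho> (v j)))"
    by (simp add: act_def sum_subtractf algebra_simps)
  also have "\<dots> \<le> (\<Sum>j<W. cmod (a j) * cmod (\<rho> (u j) - \<rho> (v j)))"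
    using norm_sum[of "\<lambda>j. a j * (\<rho> (u j) - \<rho> (v j))" "{..<W}"] by (simp add: norm_mult)
  also have "\<dots> \<le> (\<Sum>j<W. cmod (a j) * (C * hidden_dist W u v))"
  proof (rule sum_mono)
    fix j assume "j \<in> {..<W}"
    have "dist (\<rho> (u j)) (\<rho> (v j)) \<le> C * dist (u j) (v j)"
      by (rule lipschitz_onD[OF assms]) auto
    also have "\<dots> \<le> C * hidden_dist W u v"
      using \<open>j \<in> {..<W}\<close> lipschitz_on_nonneg[OF assms]
      by (simp add: dist_norm mult_left_mono norm_le_hidden_dist)
    finally have "cmod (\<rho> (u j) - \<rho> (v j)) \<le> C * hidden_dist W u v"
      by (simp add: dist_norm)
    then show "cmod (a j) * cmod (\<rho> (u j) - \<rho> (v j)) \<le> cmod (a j) * (C * hidden_dist W u v)"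
      by (simp add: mult_left_mono)
  qed
  also have "\<dots> = C * (\<Sum>j<W. cmod (a j)) * hidden_dist W u v"
    by (simp add: sum_distrib_right sum_distrib_left algebra_simps)
  finally show ?thesis .
qed

lemma approximable_lipschitz_image:
  assumes "approximable \<rho> W K h" "0 < e" "0 \<le> M"
    and "\<And>u v. d (F u) (F v) \<le> M * hidden_dist W u v"
  shows "\<exists>g\<in>NN_pre \<rho> W. \<forall>x\<in>K. d (F (g x)) (F (h x)) < e"
proof -
  obtain g where g: "g \<in> NN_pre \<rho> W" "\<forall>x\<in>K. hidden_dist W (g x) (h x) < e / (M + 1)"
    using assms(1-3) unfolding approximable_def by (meson add_nonneg_pos divide_pos_pos zero_less_one)
  show ?thesis
  proof (intro bexI[of _ g] ballI)
    fix x assume "x \<in> K"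
    have "d (F (g x)) (F (h x)) \<le> M * (e / (M + 1))"
      using assms(4)[of "g x" "h x"] mult_left_mono[OF less_imp_le[OF bspec[OF g(2) \<open>x \<in> K\<close>]] assms(3)]
      by linarith
    also have "\<dots> < e" using assms(2,3) by (simp add: field_simps)
    finally show "d (F (g x)) (F (h x)) < e" .
  qed (rule g(1))
qed

lemma approximable_layer:
  assumes "C-lipschitz_on UNIV \<rho>" "approximable \<rho> W K h"
  shows "approximable \<rho> W K (\<lambda>x. hid_affine W A c (act \<rho> (h x)))"
  unfolding approximable_def
proof (intro allI impI)
  fix e :: real assume "0 < e"
  let ?M = "(\<Sum>i<W. C * (\<Sum>j<W. cmod (A i j)))"
  have "hidden_dist W (hid_affine W A c (act \<rho> u)) (hid_affine W A c (act \<rho> v)) \<le> ?M * hidden_dist W u v"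
    for u v
  proof -
    have "hidden_dist W (hid_affine W A c (act \<rho> u)) (hid_affine W A c (act \<rho> v))
      = (\<Sum>i<W. cmod ((\<Sum>j<W. A i j * act \<rho> u j) - (\<Sum>j<W. A i j * act \<rho> v j)))"
      unfolding hidden_dist_def hid_affine_def by (intro sum.cong) auto
    also have "\<dots> \<le> ?M * hidden_dist W u v"
      unfolding sum_distrib_right by (rule sum_mono, rule norm_linear_act_diff_le[OF assms(1)])
    finally show ?thesis .
  qed
  moreover have "0 \<le> ?M" using lipschitz_on_nonneg[OF assms(1)] by (simp add: sum_nonneg)
  ultimately obtain g where g: "g \<in> NN_pre \<rho> W"
      "\<forall>x\<in>K. hidden_dist W (hid_affine W A c (act \<rho> (g x))) (hid_affine W A c (act \<rho> (h x))) < e"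
    using approximable_lipschitz_image[OF assms(2) \<open>0 < e\<close>,
        where d = "hidden_dist W" and F = "\<lambda>u. hid_affine W A c (act \<rho> u)"] by blast
  show "\<exists>g\<in>NN_pre \<rho> W. \<forall>x\<in>K. hidden_dist W (g x) (hid_affine W A c (act \<rho> (h x))) < e"
  proof (rule bexI)
    show "hid_affine W A c \<circ> act \<rho> \<circ> g \<in> NN_pre \<rho> W" by (rule NN_pre.step[OF g(1)])
  qed (use g(2) in \<open>simp only: comp_apply\<close>)
qed

lemma approximable_output:
  assumes "C-lipschitz_on UNIV \<rho>" "approximable \<rho> W K h" "0 < e"
  shows "\<exists>f\<in>(NN \<rho> W :: (complex^'n::finite \<Rightarrow> complex^'m::finite) set).
           \<forall>x\<in>K. norm (f x - out_affine W A c (act \<rho> (h x))) < e"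
proof -
  let ?M = "(\<Sum>k\<in>(UNIV::'m set). C * (\<Sum>j<W. cmod (A k j)))"
  have "norm (out_affine W A c (act \<rho> u) - out_affine W A c (act \<rho> v)) \<le> ?M * hidden_dist W u v"
    for u v
  proof -
    have "norm (out_affine W A c (act \<rho> u) - out_affine W A c (act \<rho> v))
      \<le> (\<Sum>k\<in>UNIV. cmod ((\<Sum>j<W. A k j * act \<rho> u j) - (\<Sum>j<W. A k j * act \<rho> v j)))"
      using norm_vec_le_sum[of "out_affine W A c (act \<rho> u) - out_affine W A c (act \<rho> v)"]
      by (simp add: out_affine_def)
    also have "\<dots> \<le> ?M * hidden_dist W u v"
      unfolding sum_distrib_right by (rule sum_mono, rule norm_linear_act_diff_le[OF assms(1)])
    finally show ?thesis .
  qed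
  moreover have "0 \<le> ?M" using lipschitz_on_nonneg[OF assms(1)] by (simp add: sum_nonneg)
  ultimately obtain g where g: "g \<in> NN_pre \<rho> W"
      "\<forall>x\<in>K. norm (out_affine W A c (act \<rho> (g x)) - out_affine W A c (act \<rho> (h x))) < e"
    using approximable_lipschitz_image[OF assms(2,3),
        where d = "\<lambda>a b. norm (a - b)" and F = "\<lambda>u. out_affine W A c (act \<rho> u)"] by blast
  show ?thesis
  proof (rule bexI)
    show "out_affine W A c \<circ> act \<rho> \<circ> g \<in> (NN \<rho> W :: (complex^'n \<Rightarrow> complex^'m) set)"
      unfolding NN_def using g(1) by blast
  qed (use g(2) in \<open>simp only: comp_apply\<close>)
qed

section \<open>Computing with encoded real vectors\<close>

lemma sum_two_points:
  fixes v :: "nat \<Rightarrow> 'a::comm_semiring_1"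
  assumes "i < W" "j < W" "i \<noteq> j"
  shows "(\<Sum>k<W. (if k = i then p else if k = j then q else 0) * v k) = p * v i + q * v j"
proof -
  have "(\<Sum>k<W. (if k = i then p else if k = j then q else 0) * v k)
      = (\<Sum>k<W. (if k = i then p * v i else 0) + (if k = j then q * v j else 0))"
    using assms by (intro sum.cong) auto
  also have "\<dots> = p * v i + q * v j" using assms by (simp add: sum.distrib)
  finally show ?thesis .
qed

text \<open>A real vector u with entries in [-B, B] is stored in a hidden layer so that modReLU (-r)
  acts on the coordinates in S as r/B times the ReLU (they lie in [0, 2r]) and on all other
  coordinates as subtraction of r (they lie above r).\<close>
definition encode :: "nat \<Rightarrow> real \<Rightarrow> real \<Rightarrow> nat set \<Rightarrow> (nat \<Rightarrow> real) \<Rightarrow> nat \<Rightarrow> complex" where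
  "encode W B r S u i =
     (if i < W then of_real (if i \<in> S then r / B * u i + r else u i + B + r) else 0)"

definition relu_on :: "nat set \<Rightarrow> (nat \<Rightarrow> real) \<Rightarrow> nat \<Rightarrow> real" where
  "relu_on S u k = (if k \<in> S then max (u k) 0 else u k)"

lemma modReLU_encode:
  assumes "0 < r" "0 < B" "\<bar>u k\<bar> \<le> B"
  shows "modReLU (-r) (of_real (if k \<in> S then r / B * u k + r else u k + B + r))
    = of_real (if k \<in> S then r / B * max (u k) 0 else u k + B)"
proof (cases "k \<in> S")
  case True
  have "r / B * \<bar>u k\<bar> \<le> r / B * B" using assms by (intro mult_left_mono) auto
  then have "\<bar>r / B * u k\<bar> \<le> r" using assms by (simp add: abs_mult)
  then have "0 \<le> r / B * u k + r" using abs_le_D2 by fastforce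
  then have "modReLU (-r) (of_real (r / B * u k + r)) = of_real (max (r / B * u k) 0)"
    using modReLU_of_nonneg[of "r / B * u k + r" r] assms by simp
  moreover have "max (r / B * u k) 0 = r / B * max (u k) 0"
    using assms by (simp add: max_mult_distrib_left)
  ultimately show ?thesis using True by simp
next
  case False
  then show ?thesis using assms modReLU_of_nonneg[of "u k + B + r" r] by simp
qed

lemma hid_affine_of_real:
  assumes "\<And>k. k < W \<Longrightarrow> z k = of_real (x k)"
  shows "hid_affine W (\<lambda>i k. of_real (A i k)) (\<lambda>i. of_real (c i)) z
    = (\<lambda>i. if i < W then of_real ((\<Sum>k<W. A i k * x k) + c i) else 0)"
  using assms by (simp add: hid_affine_def fun_eq_iff)

lemma encode_layer:
  assumes "0 < r" "0 < B"
  shows "\<exists>A c. \<forall>u. (\<forall>k<W. \<bar>u k\<bar> \<le> B) \<longrightarrow>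
    hid_affine W A c (act (modReLU (-r)) (encode W B r S u))
      = encode W B r S' ((relu_on S u)(j := \<alpha> + (\<Sum>k<W. coef k * relu_on S u k)))"
proof -
  \<comment> \<open>after the activation, node k holds d k * relu_on S u k + f k\<close>
  define d where "d k = (if k \<in> S then r / B else 1)" for k
  define f where "f k = (if k \<in> S then 0 else B)" for k
  define s where "s i = (if i \<in> S' then r / B else 1)" for i
  define e where "e i = (if i \<in> S' then r else B + r)" for i
  define A where "A i k = (if i = j then s i * coef k / d k else if k = i then s i / d i else 0)" for i k
  define c where "c i = e i - s i * (if i = j then (\<Sum>k<W. coef k * f k / d k) - \<alpha> else f i / d i)" for i
  have d: "d k \<noteq> 0" for k using assms by (simp add: d_def)
  show ?thesis
  proof (intro exI allI impI)
    fix u :: "nat \<Rightarrow> real" assume ub: "\<forall>k<W. \<bar>u k\<bar> \<le> B"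
    define z where "z k = d k * relu_on S u k + f k" for k
    let ?v = "(relu_on S u)(j := \<alpha> + (\<Sum>k<W. coef k * relu_on S u k))"
    have "act (modReLU (-r)) (encode W B r S u) k = of_real (z k)" if "k < W" for k
      using modReLU_encode[OF assms, of u k S] ub that
      unfolding act_def encode_def z_def d_def f_def relu_on_def by auto
    then have "hid_affine W (\<lambda>i k. of_real (A i k)) (\<lambda>i. of_real (c i)) (act (modReLU (-r)) (encode W B r S u))
        = (\<lambda>i. if i < W then of_real ((\<Sum>k<W. A i k * z k) + c i) else 0)"
      by (rule hid_affine_of_real)
    also have "\<dots> = encode W B r S' ?v"
    proof
      fix i
      have relu: "relu_on S u k = (z k - f k) / d k" for k
        using d[of k] by (simp add: z_def)
      have "(\<Sum>k<W. A i k * z k) + c i = s i * ?v i + e i" if "i < W"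
      proof (cases "i = j")
        case True
        then show ?thesis
          by (simp add: A_def c_def relu sum_distrib_left sum_subtractf diff_divide_distrib
              field_simps sum_divide_distrib)
      next
        case False
        then have "(\<Sum>k<W. A i k * z k) = s i * z i / d i"
          using that by (simp add: A_def if_distrib[of "\<lambda>a. a * _"] sum.delta cong: if_cong)
        then show ?thesis using False d[of i] by (simp add: c_def relu field_simps)
      qed
      then show "(if i < W then of_real ((\<Sum>k<W. A i k * z k) + c i) else 0) = encode W B r S' ?v i"
        by (simp add: encode_def s_def e_def)
    qed
    finally show "hid_affine W (\<lambda>i k. of_real (A i k)) (\<lambda>i. of_real (c i)) (act (modReLU (-r)) (encode W B r S u))
        = encode W B r S' ?v" .
  qed
qed

lemma relu_on_empty [simp]: "relu_on {} u = u"
  by (simp add: relu_on_def fun_eq_iff)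

lemma relu_on_singleton [simp]: "relu_on {j} u = u(j := max (u j) 0)"
  by (simp add: relu_on_def fun_eq_iff)

text \<open>Nodes 0, ..., N - 1 hold the real input coordinates y x and node T serves as scratch register.\<close>
locale cone_program =
  fixes r B0 :: real and W T N :: nat and K :: "(complex^'n::finite) set"
    and y :: "complex^'n \<Rightarrow> nat \<Rightarrow> real"
  assumes r_pos: "0 < r" and B0_pos: "0 < B0" and N_le_T: "N \<le> T" and T_less_W: "T < W"
begin

abbreviation enc :: "nat set \<Rightarrow> (nat \<Rightarrow> real) \<Rightarrow> nat \<Rightarrow> complex" where
  "enc \<equiv> encode W (2 * B0) r"

definition computable :: "(complex^'n \<Rightarrow> nat \<Rightarrow> real) \<Rightarrow> bool" where
  "computable u \<longleftrightarrow>
     approximable (modReLU (-r)) W K (\<lambda>x. enc {} (u x)) \<and> (\<forall>x\<in>K. \<forall>k<W. \<bar>u x k\<bar> \<le> B0)"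

lemma computable_cong: "computable u \<Longrightarrow> (\<And>x. x \<in> K \<Longrightarrow> u x = u' x) \<Longrightarrow> computable u'"
  unfolding computable_def by (auto intro: approximable_cong)

lemma approximable_encode_step:
  assumes "approximable (modReLU (-r)) W K (\<lambda>x. enc S (u x))" "\<forall>x\<in>K. \<forall>k<W. \<bar>u x k\<bar> \<le> 2 * B0"
  shows "approximable (modReLU (-r)) W K
    (\<lambda>x. enc S' ((relu_on S (u x))(j := \<alpha> + (\<Sum>k<W. coef k * relu_on S (u x) k))))"
proof -
  obtain A c where layer: "\<forall>v. (\<forall>k<W. \<bar>v k\<bar> \<le> 2 * B0) \<longrightarrow> hid_affine W A c (act (modReLU (-r)) (enc S v))
      = enc S' ((relu_on S v)(j := \<alpha> + (\<Sum>k<W. coef k * relu_on S v k)))"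
    using encode_layer[OF r_pos, where B = "2 * B0" and W = W and S = S and S' = S' and j = j
        and \<alpha> = \<alpha> and coef = coef] B0_pos by auto
  show ?thesis
    using approximable_layer[OF modReLU_lipschitz[OF r_pos] assms(1), of A c]
    by (rule approximable_cong) (use layer assms(2) in auto)
qed

lemma computable_update:
  assumes "computable u" "j < W" "\<forall>x\<in>K. \<bar>\<alpha> + (\<Sum>k<W. coef k * u x k)\<bar> \<le> B0"
  shows "computable (\<lambda>x. (u x)(j := \<alpha> + (\<Sum>k<W. coef k * u x k)))"
  unfolding computable_def
proof
  show "approximable (modReLU (-r)) W K (\<lambda>x. enc {} ((u x)(j := \<alpha> + (\<Sum>k<W. coef k * u x k))))"
    using approximable_encode_step[of "{}" u "{}" j \<alpha> coef] assms(1) B0_pos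
    by (force simp: computable_def)
qed (use assms in \<open>auto simp: computable_def\<close>)

lemma computable_min:
  assumes "computable u" "i < W" "i \<noteq> T" "\<forall>x\<in>K. \<bar>\<alpha> + \<beta> * u x i\<bar> \<le> B0"
  shows "computable (\<lambda>x. (u x)(T := min (u x T) (\<alpha> + \<beta> * u x i)))"
  unfolding computable_def
proof
  define coef where "coef k = (if k = i then \<beta> else if k = T then -1 else 0 :: real)" for k
  have lin: "(\<Sum>k<W. coef k * v k) = \<beta> * v i - v T" for v
    unfolding coef_def using sum_two_points[OF assms(2) T_less_W assms(3), of \<beta> "-1" v] by simp
  have u: "\<forall>x\<in>K. \<forall>k<W. \<bar>u x k\<bar> \<le> B0" using assms(1) by (simp add: computable_def)
  let ?u1 = "\<lambda>x. (u x)(T := \<alpha> + \<beta> * u x i - u x T)"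
  \<comment> \<open>min a b = a - max (a - b) 0: store \<alpha> + \<beta> u_i - u_T in node T, then ReLU it\<close>
  have "approximable (modReLU (-r)) W K (\<lambda>x. enc {T} (?u1 x))"
    using approximable_encode_step[of "{}" u "{T}" T \<alpha> coef] assms(1) u B0_pos
    by (force simp: computable_def lin algebra_simps)
  moreover have "\<forall>x\<in>K. \<forall>k<W. \<bar>?u1 x k\<bar> \<le> 2 * B0"
    using u assms(4) T_less_W by (fastforce simp: abs_le_iff)
  ultimately have "approximable (modReLU (-r)) W K
      (\<lambda>x. enc {} ((relu_on {T} (?u1 x))(T := \<alpha> + (\<Sum>k<W. coef k * relu_on {T} (?u1 x) k))))"
    by (rule approximable_encode_step)
  then show "approximable (modReLU (-r)) W K (\<lambda>x. enc {} ((u x)(T := min (u x T) (\<alpha> + \<beta> * u x i))))"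
    by (rule approximable_cong) (use assms(3) in \<open>auto simp: lin min_def max_def\<close>)
  show "\<forall>x\<in>K. \<forall>k<W. \<bar>((u x)(T := min (u x T) (\<alpha> + \<beta> * u x i))) k\<bar> \<le> B0"
    using u assms(4) T_less_W by (fastforce simp: abs_le_iff)
qed

lemma computable_max:
  assumes "computable u" "j < W" "j \<noteq> T"
  shows "computable (\<lambda>x. (u x)(j := max (u x j) (u x T)))"
  unfolding computable_def
proof
  define coef where "coef s k = (if k = j then 1 else if k = T then s else 0 :: real)" for s k
  have lin: "(\<Sum>k<W. coef s k * v k) = v j + s * v T" for s v
    unfolding coef_def using sum_two_points[OF assms(2) T_less_W assms(3), of 1 s v] by simp
  have u: "\<forall>x\<in>K. \<forall>k<W. \<bar>u x k\<bar> \<le> B0" using assms(1) by (simp add: computable_def)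
  let ?u1 = "\<lambda>x. (u x)(j := u x j - u x T)"
  have "approximable (modReLU (-r)) W K (\<lambda>x. enc {j} (?u1 x))"
    using approximable_encode_step[of "{}" u "{j}" j 0 "coef (-1)"] assms(1) u B0_pos
    by (force simp: computable_def lin)
  moreover have "\<forall>x\<in>K. \<forall>k<W. \<bar>?u1 x k\<bar> \<le> 2 * B0"
  proof (intro ballI allI impI)
    fix x k assume "x \<in> K" "k < W"
    then have "\<bar>u x j\<bar> \<le> B0" "\<bar>u x T\<bar> \<le> B0" "\<bar>u x k\<bar> \<le> B0"
      using u assms(2) T_less_W by auto
    then show "\<bar>?u1 x k\<bar> \<le> 2 * B0" by (auto simp: abs_le_iff)
  qed
  ultimately have "approximable (modReLU (-r)) W K
      (\<lambda>x. enc {} ((relu_on {j} (?u1 x))(j := 0 + (\<Sum>k<W. coef 1 k * relu_on {j} (?u1 x) k))))"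
    by (rule approximable_encode_step)
  then show "approximable (modReLU (-r)) W K (\<lambda>x. enc {} ((u x)(j := max (u x j) (u x T))))"
    by (rule approximable_cong) (use assms(3) in \<open>auto simp: lin max_def\<close>)
  show "\<forall>x\<in>K. \<forall>k<W. \<bar>((u x)(j := max (u x j) (u x T))) k\<bar> \<le> B0"
    using u assms(2) T_less_W by (fastforce simp: abs_le_iff)
qed

end

section \<open>Networks computing maxima of cones\<close>

fun sup_dist :: "nat \<Rightarrow> (nat \<Rightarrow> real) \<Rightarrow> (nat \<Rightarrow> real) \<Rightarrow> real" where
  "sup_dist 0 y z = 0"
| "sup_dist (Suc k) y z = max (sup_dist k y z) \<bar>y k - z k\<bar>"

lemma sup_dist_nonneg: "0 \<le> sup_dist k y z"
  by (induction k) auto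

lemma abs_diff_le_sup_dist: "i < k \<Longrightarrow> \<bar>y i - z i\<bar> \<le> sup_dist k y z"
  by (induction k) (auto simp: less_Suc_eq)

lemma sup_dist_le: "0 \<le> d \<Longrightarrow> (\<And>i. i < k \<Longrightarrow> \<bar>y i - z i\<bar> \<le> d) \<Longrightarrow> sup_dist k y z \<le> d"
  by (induction k) auto

lemma sup_dist_cong: "(\<And>i. i < k \<Longrightarrow> y i = y' i) \<Longrightarrow> sup_dist k y z = sup_dist k y' z"
  by (induction k) auto

definition max_cones :: "real \<Rightarrow> ('a \<Rightarrow> real) \<Rightarrow> real \<Rightarrow> ('a \<Rightarrow> 'a \<Rightarrow> real) \<Rightarrow> 'a list \<Rightarrow> 'a \<Rightarrow> real" where
  "max_cones a \<phi> L \<rho> cs x = Max (insert a ((\<lambda>c. \<phi> c - L * \<rho> x c) ` set cs))"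

lemma max_cones_Nil [simp]: "max_cones a \<phi> L \<rho> [] x = a"
  by (simp add: max_cones_def)

lemma max_cones_Cons [simp]:
  "max_cones a \<phi> L \<rho> (c # cs) x = max (\<phi> c - L * \<rho> x c) (max_cones a \<phi> L \<rho> cs x)"
  unfolding max_cones_def
  using Max_insert[of "insert a ((\<lambda>c. \<phi> c - L * \<rho> x c) ` set cs)" "\<phi> c - L * \<rho> x c"]
  by (simp add: insert_commute)

lemma min_diff_mult_eq: "0 \<le> (L::real) \<Longrightarrow> min (G - L * a) (G - L * b) = G - L * max a b"
  using mult_left_mono[of a b L] mult_left_mono[of b a L] by (auto simp: min_def max_def)

lemma max_cones_le:
  "a \<le> b \<Longrightarrow> (\<And>c. c \<in> set cs \<Longrightarrow> \<phi> c - L * \<rho> x c \<le> b) \<Longrightarrow> max_cones a \<phi> L \<rho> cs x \<le> b"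
  by (induction cs) auto

lemma max_cones_ge: "c \<in> set cs \<Longrightarrow> \<phi> c - L * \<rho> x c \<le> max_cones a \<phi> L \<rho> cs x"
  by (induction cs) auto

context cone_program
begin

abbreviation input_dist :: "complex^'n \<Rightarrow> complex^'n \<Rightarrow> real" where
  "input_dist x c \<equiv> sup_dist N (y x) (y c)"


lemma computable_cone:
  assumes "computable u" "0 \<le> L" "k \<le> N" "\<forall>x\<in>K. \<bar>G\<bar> + L * sup_dist N (u x) z \<le> B0"
  shows "computable (\<lambda>x. (u x)(T := G - L * sup_dist k (u x) z))"
  using assms(3)
proof (induction k)
  case 0
  have "\<bar>G\<bar> \<le> B0" if "x \<in> K" for x
    using bspec[OF assms(4) that] mult_nonneg_nonneg[OF assms(2) sup_dist_nonneg[of N "u x" z]]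
    by linarith
  then have "computable (\<lambda>x. (u x)(T := G + (\<Sum>k<W. 0 * u x k)))"
    by (intro computable_update[OF assms(1) T_less_W]) auto
  then show ?case by (rule computable_cong) (simp add: fun_eq_iff)
next
  case (Suc k)
  let ?s = "\<lambda>x. sup_dist k (u x) z"
  have k: "k < W" "k \<noteq> T" using Suc.prems N_le_T T_less_W by auto
  have bound: "\<bar>G - L * (u x k - z k)\<bar> \<le> B0" "\<bar>G + L * (u x k - z k)\<bar> \<le> B0" if "x \<in> K" for x
  proof -
    have "\<bar>L * (u x k - z k)\<bar> \<le> L * sup_dist N (u x) z"
      using abs_diff_le_sup_dist[of k N] Suc.prems assms(2) by (simp add: abs_mult mult_left_mono)
    then show "\<bar>G - L * (u x k - z k)\<bar> \<le> B0" "\<bar>G + L * (u x k - z k)\<bar> \<le> B0"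
      using bspec[OF assms(4) that] by (auto simp: abs_le_iff)
  qed
  have "computable (\<lambda>x. (u x)(T := G - L * ?s x))" using Suc by (simp add: fun_upd_def)
  from computable_min[OF this k, of "G + L * z k" "-L"]
  have "computable (\<lambda>x. (u x)(T := min (G - L * ?s x) (G - L * (u x k - z k))))"
    using k bound by (simp add: algebra_simps)
  from computable_min[OF this k, of "G - L * z k" L]
  have "computable (\<lambda>x. (u x)(T := min (min (G - L * ?s x) (G - L * (u x k - z k)))
    (G - L * (z k - u x k))))"
    using k bound by (simp add: algebra_simps)
  then show ?case
    by (rule computable_cong) (simp add: min_diff_mult_eq[OF assms(2)] abs_if max_def fun_eq_iff)
qed

lemma computable_max_cones:
  assumes "computable u" "\<forall>x\<in>K. \<forall>i<N. u x i = y x i" "N \<le> q" "q < W" "q \<noteq> T" "0 \<le> L"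
    and "\<forall>x\<in>K. \<forall>c\<in>set cs. \<bar>\<phi> c\<bar> + L * input_dist x c \<le> B0"
  shows "\<exists>v. computable v \<and> (\<forall>x\<in>K. v x q = max_cones (-B0) \<phi> L input_dist cs x
    \<and> (\<forall>k. k \<noteq> q \<and> k \<noteq> T \<longrightarrow> v x k = u x k))"
  using assms(7)
proof (induction cs)
  case Nil
  have "computable (\<lambda>x. (u x)(q := -B0 + (\<Sum>k<W. 0 * u x k)))"
    by (rule computable_update[OF assms(1) assms(4)]) (simp add: less_imp_le[OF B0_pos])
  then show ?case by force
next
  case (Cons c cs)
  then obtain v where v: "computable v"
    "\<forall>x\<in>K. v x q = max_cones (-B0) \<phi> L input_dist cs x \<and> (\<forall>k. k \<noteq> q \<and> k \<noteq> T \<longrightarrow> v x k = u x k)"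
    by auto
  have inputs: "sup_dist N (v x) (y c) = input_dist x c" if "x \<in> K" for x
    using v(2) assms(2,3) N_le_T that by (intro sup_dist_cong) auto
  have "computable (\<lambda>x. (v x)(T := \<phi> c - L * sup_dist N (v x) (y c)))"
    using Cons.prems inputs by (intro computable_cone[OF v(1) assms(6)]) auto
  then have cone: "computable (\<lambda>x. (v x)(T := \<phi> c - L * input_dist x c))"
    by (rule computable_cong) (simp add: inputs)
  let ?w = "\<lambda>x. ((v x)(T := \<phi> c - L * input_dist x c))(q := max (v x q) (\<phi> c - L * input_dist x c))"
  from computable_max[OF cone assms(4,5)] have "computable ?w" by (simp add: assms(5))
  moreover have "\<forall>x\<in>K. ?w x q = max_cones (-B0) \<phi> L input_dist (c # cs) x
      \<and> (\<forall>k. k \<noteq> q \<and> k \<noteq> T \<longrightarrow> ?w x k = u x k)"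
    using v(2) by (auto simp: max.commute)
  ultimately show ?case by blast
qed

lemma computable_outputs:
  assumes "computable u" "\<forall>x\<in>K. \<forall>i<N. u x i = y x i" "N + M \<le> T" "\<forall>q<M. 0 \<le> L q"
    and "\<forall>q<M. \<forall>x\<in>K. \<forall>c\<in>set (cs q). \<bar>\<phi> q c\<bar> + L q * input_dist x c \<le> B0"
  shows "\<exists>v. computable v \<and> (\<forall>x\<in>K. \<forall>q<M. v x (N + q) = max_cones (-B0) (\<phi> q) (L q) input_dist (cs q) x)"
proof -
  have "\<exists>v. computable v \<and> (\<forall>x\<in>K. (\<forall>i<N. v x i = y x i)
    \<and> (\<forall>q<M. v x (N + q) = max_cones (-B0) (\<phi> q) (L q) input_dist (cs q) x))"
    using assms(3-5)
  proof (induction M)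
    case 0
    then show ?case using assms(1,2) by blast
  next
    case (Suc M)
    then obtain v where v: "computable v" "\<forall>x\<in>K. \<forall>i<N. v x i = y x i"
      "\<forall>x\<in>K. \<forall>q<M. v x (N + q) = max_cones (-B0) (\<phi> q) (L q) input_dist (cs q) x"
      by auto
    have out: "N \<le> N + M" "N + M < W" "N + M \<noteq> T" using Suc.prems(1) T_less_W by auto
    obtain w where w: "computable w"
      "\<forall>x\<in>K. w x (N + M) = max_cones (-B0) (\<phi> M) (L M) input_dist (cs M) x
        \<and> (\<forall>k. k \<noteq> N + M \<and> k \<noteq> T \<longrightarrow> w x k = v x k)"
      using computable_max_cones[OF v(1,2) out, of "L M" "cs M" "\<phi> M"] Suc.prems by auto
    have "\<forall>x\<in>K. \<forall>i<N. w x i = y x i" using w(2) v(2) N_le_T by force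
    moreover have "\<forall>x\<in>K. \<forall>q<Suc M. w x (N + q) = max_cones (-B0) (\<phi> q) (L q) input_dist (cs q) x"
      using w(2) v(3) Suc.prems(1) by (auto simp: less_Suc_eq)
    ultimately show ?case using w(1) by blast
  qed
  then show ?thesis by blast
qed

end

definition real_coords :: "nat \<Rightarrow> (nat \<Rightarrow> 'n::finite) \<Rightarrow> complex^'n \<Rightarrow> nat \<Rightarrow> real" where
  "real_coords n en x i = (if i < 2 * n then (if even i then Re else Im) (x $ en (i div 2)) else 0)"

lemma real_coords_diff: "real_coords n en (x - z) i = real_coords n en x i - real_coords n en z i"
  by (simp add: real_coords_def)

lemma abs_real_coords_le: "\<bar>real_coords n en x i\<bar> \<le> norm x"
proof -
  have "\<bar>real_coords n en x i\<bar> \<le> cmod (x $ en (i div 2))"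
    by (auto simp: real_coords_def abs_Re_le_cmod abs_Im_le_cmod)
  also have "\<dots> \<le> norm x" by (rule Finite_Cartesian_Product.norm_nth_le)
  finally show ?thesis .
qed

lemma sup_dist_real_coords_le: "sup_dist k (real_coords n en x) (real_coords n en z) \<le> dist x z"
  by (rule sup_dist_le) (auto simp: dist_norm abs_real_coords_le simp flip: real_coords_diff)

lemma dist_le_sup_dist_real_coords:
  assumes "bij_betw en {..<n} (UNIV :: 'n::finite set)"
  shows "dist x z \<le> 2 * real n * sup_dist (2 * n) (real_coords n en x) (real_coords n en z)"
proof -
  let ?s = "sup_dist (2 * n) (real_coords n en x) (real_coords n en z)"
  have coord: "\<bar>real_coords n en (x - z) i\<bar> \<le> ?s" if "i < 2 * n" for i
    using abs_diff_le_sup_dist[OF that] by (simp add: real_coords_diff)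
  have "dist x z \<le> (\<Sum>q\<in>UNIV. cmod ((x - z) $ q))"
    unfolding dist_norm by (rule norm_vec_le_sum)
  also have "\<dots> = (\<Sum>j<n. cmod ((x - z) $ en j))"
    using sum.reindex_bij_betw[OF assms, of "\<lambda>q. cmod ((x - z) $ q)"] by simp
  also have "\<dots> \<le> (\<Sum>j<n. 2 * ?s)"
  proof (rule sum_mono)
    fix j assume "j \<in> {..<n}"
    then have "\<bar>Re ((x - z) $ en j)\<bar> \<le> ?s" "\<bar>Im ((x - z) $ en j)\<bar> \<le> ?s"
      using coord[of "2 * j"] coord[of "2 * j + 1"] by (auto simp: real_coords_def)
    then show "cmod ((x - z) $ en j) \<le> 2 * ?s" using cmod_le[of "(x - z) $ en j"] by linarith
  qed
  finally show ?thesis by simp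
qed

section \<open>The input layer\<close>

lemma cmod_minus_Re_le:
  assumes "1 / 2 \<le> Re w"
  shows "cmod w - Re w \<le> (Im w)\<^sup>2"
proof -
  have "(cmod w - Re w) * (cmod w + Re w) = (Im w)\<^sup>2"
    by (simp add: cmod_power2 algebra_simps power2_eq_square[symmetric])
  moreover have "1 \<le> cmod w + Re w" using assms complex_Re_le_cmod[of w] by linarith
  moreover have "0 \<le> cmod w - Re w" using complex_Re_le_cmod[of w] by linarith
  ultimately show ?thesis by (metis mult_left_mono mult.right_neutral order_trans)
qed

lemma norm_sgn_one_plus_approx:
  assumes "cmod v \<le> 1 / 2"
  shows "cmod (sgn (1 + v) - 1 - \<i> * of_real (Im v)) \<le> 3 * (cmod v)\<^sup>2"
proof -
  define p where "p = sgn (1 + v)"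
  define N where "N = cmod (1 + v)"
  have Re: "\<bar>Re v\<bar> \<le> cmod v" and Im: "\<bar>Im v\<bar> \<le> cmod v"
    by (rule abs_Re_le_cmod, rule abs_Im_le_cmod)
  have "1 / 2 \<le> Re (1 + v)" using assms Re by simp
  from cmod_minus_Re_le[OF this] have "N - (1 + Re v) \<le> (Im v)\<^sup>2" by (simp add: N_def)
  moreover have "(Im v)\<^sup>2 \<le> (cmod v)\<^sup>2" using Im by (metis abs_ge_zero power2_abs power_mono)
  ultimately have N: "0 \<le> N - (1 + Re v)" "N - (1 + Re v) \<le> (cmod v)\<^sup>2"
    using complex_Re_le_cmod[of "1 + v"] by (auto simp: N_def)
  have "1 + v \<noteq> 0" using assms Re by (auto simp: complex_eq_iff)
  then have p: "p * of_real N = 1 + v" "cmod p = 1"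
    by (simp_all add: p_def N_def sgn_eq norm_divide)
  \<comment> \<open>p N = 1 + v, rewritten so that every term carries a factor of size O(|v|)\<close>
  have "p - 1 - \<i> * of_real (Im v) = of_real (Re v) * (1 - p) - of_real (N - (1 + Re v)) * p"
    using p(1) complex_eq[of v] by (simp add: algebra_simps)
  then have "cmod (p - 1 - \<i> * of_real (Im v)) \<le> \<bar>Re v\<bar> * cmod (1 - p) + \<bar>N - (1 + Re v)\<bar> * cmod p"
    using norm_triangle_ineq4[of "of_real (Re v) * (1 - p)" "of_real (N - (1 + Re v)) * p"]
    by (simp only: norm_mult norm_of_real)
  also have "\<dots> \<le> cmod v * (2 * cmod v) + (cmod v)\<^sup>2"
  proof -
    have "cmod (1 - p) \<le> 2 * cmod v"
      using norm_sgn_diff_le[of 1 "1 + v"] \<open>1 + v \<noteq> 0\<close> by (simp add: p_def)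
    then have "\<bar>Re v\<bar> * cmod (1 - p) \<le> cmod v * (2 * cmod v)"
      using Re by (simp add: mult_mono)
    then show ?thesis using N p(2) by simp
  qed
  finally show ?thesis by (simp add: p_def power2_eq_square)
qed

lemma modReLU_large_shift:
  assumes "0 < r" "r + cmod w \<le> C" "2 * cmod w \<le> C"
  obtains E where "modReLU (-r) (of_real C + w) = of_real C + w - of_real r * (1 + \<i> * of_real (Im w / C) + E)"
    and "cmod E \<le> 3 * (cmod w / C)\<^sup>2"
proof
  have C: "0 < C" using assms by (smt (verit) norm_ge_zero)
  have "C - cmod w \<le> cmod (of_real C + w)" using norm_diff_ineq[of "of_real C" w] C by simp
  then have "modReLU (-r) (of_real C + w) = of_real C + w - of_real r * sgn (of_real C + w)"
    using assms by (intro modReLU_eq_shift) auto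
  also have "sgn (of_real C + w) = sgn (1 + w / of_real C)"
  proof -
    have "of_real C + w = of_real C * (1 + w / of_real C)" using C by (simp add: field_simps)
    then show ?thesis using C by (simp add: sgn_mult sgn_of_real)
  qed
  finally show "modReLU (-r) (of_real C + w) = of_real C + w - of_real r * (1 + \<i> * of_real (Im w / C)
      + (sgn (1 + w / of_real C) - 1 - \<i> * of_real (Im w / C)))"
    by simp
  have "cmod (w / of_real C) \<le> 1 / 2" using assms C by (simp add: norm_divide field_simps)
  from norm_sgn_one_plus_approx[OF this]
  show "cmod (sgn (1 + w / of_real C) - 1 - \<i> * of_real (Im w / C)) \<le> 3 * (cmod w / C)\<^sup>2"
    using C by (simp add: norm_divide Im_divide_of_real)
qed

lemma modReLU_two_shifts:
  assumes "0 < r" "cmod w \<le> R" "r + R \<le> C" "2 * R \<le> C"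
  obtains E1 E2
  where "modReLU (-r) (of_real C + w) = of_real C + w - of_real r * (1 + \<i> * of_real (Im w / C) + E1)"
    and "of_real (2 * C / r) * (modReLU (-r) (of_real (2 * C) + w) - modReLU (-r) (of_real C + w) - of_real C)
      = \<i> * of_real (Im w) + of_real (2 * C) * (E1 - E2)"
    and "cmod E1 \<le> 3 * R\<^sup>2 / C\<^sup>2" "cmod (E1 - E2) \<le> 15 / 4 * R\<^sup>2 / C\<^sup>2"
proof -
  have R: "0 \<le> R" using assms(2) norm_ge_zero order_trans by blast
  have C: "0 < C" using assms(1,3) R by linarith
  have shift: "r + cmod w \<le> C" "2 * cmod w \<le> C" "r + cmod w \<le> 2 * C" "2 * cmod w \<le> 2 * C"
    using assms(2-4) R by linarith+
  define z1 where "z1 = modReLU (-r) (of_real C + w)"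
  define z2 where "z2 = modReLU (-r) (of_real (2 * C) + w)"
  obtain E1 where z1: "z1 = of_real C + w - of_real r * (1 + \<i> * of_real (Im w / C) + E1)"
      and E1: "cmod E1 \<le> 3 * (cmod w / C)\<^sup>2"
    using modReLU_large_shift[OF assms(1) shift(1,2)] unfolding z1_def by blast
  obtain E2 where z2: "z2 = of_real (2 * C) + w - of_real r * (1 + \<i> * of_real (Im w / (2 * C)) + E2)"
      and E2: "cmod E2 \<le> 3 * (cmod w / (2 * C))\<^sup>2"
    using modReLU_large_shift[OF assms(1) shift(3,4)] unfolding z2_def by blast
  have "(cmod w / C)\<^sup>2 \<le> (R / C)\<^sup>2" "(cmod w / (2 * C))\<^sup>2 \<le> (R / (2 * C))\<^sup>2"
    using assms(2) C by (auto intro!: power_mono divide_right_mono)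
  then have E: "cmod E1 \<le> 3 * R\<^sup>2 / C\<^sup>2" "cmod E2 \<le> 3 * R\<^sup>2 / (4 * C\<^sup>2)"
    using E1 E2 by (simp_all add: power_divide power_mult_distrib)
  then have "cmod (E1 - E2) \<le> 15 / 4 * R\<^sup>2 / C\<^sup>2"
    using norm_triangle_ineq4[of E1 E2] by (simp add: field_simps)
  \<comment> \<open>the leading terms of the two shifts cancel, leaving Im w up to O(R^2 / C)\<close>
  moreover have "of_real (2 * C / r) * (z2 - z1 - of_real C) = \<i> * of_real (Im w) + of_real (2 * C) * (E1 - E2)"
    unfolding z1 z2 using C assms(1) by (simp add: field_simps)
  ultimately show ?thesis using that z1 E(1) unfolding z1_def z2_def by blast
qed

lemma modReLU_extracts_Im:
  assumes "0 < r" "cmod w \<le> R" "r + R \<le> C" "2 * R \<le> C"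
  shows "cmod (\<i> * of_real (2 * C / r) * (modReLU (-r) (of_real C + w) - modReLU (-r) (of_real (2 * C) + w)
    + of_real C) - of_real (Im w)) \<le> 8 * R\<^sup>2 / C"
proof -
  define z1 where "z1 = modReLU (-r) (of_real C + w)"
  define z2 where "z2 = modReLU (-r) (of_real (2 * C) + w)"
  define \<mu> :: complex where "\<mu> = of_real (2 * C / r)"
  obtain E1 E2 where I: "\<mu> * (z2 - z1 - of_real C) = \<i> * of_real (Im w) + of_real (2 * C) * (E1 - E2)"
    and E: "cmod (E1 - E2) \<le> 15 / 4 * R\<^sup>2 / C\<^sup>2"
    unfolding z1_def z2_def \<mu>_def by (rule modReLU_two_shifts[OF assms])
  have C: "0 < C" using assms by (smt (verit) norm_ge_zero)
  have "\<i> * \<mu> * (z1 - z2 + of_real C) = - \<i> * (\<mu> * (z2 - z1 - of_real C))"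
    by (simp add: algebra_simps)
  then have "\<i> * \<mu> * (z1 - z2 + of_real C) - of_real (Im w) = - \<i> * (of_real (2 * C) * (E1 - E2))"
    unfolding I by (simp add: algebra_simps)
  then have "cmod (\<i> * \<mu> * (z1 - z2 + of_real C) - of_real (Im w)) = 2 * C * cmod (E1 - E2)"
    using C by (simp add: norm_mult)
  also have "\<dots> \<le> 2 * C * (15 / 4 * R\<^sup>2 / C\<^sup>2)" using E C by (intro mult_left_mono) auto
  also have "\<dots> \<le> 8 * R\<^sup>2 / C" using C by (simp add: power2_eq_square field_simps)
  finally show ?thesis unfolding z1_def z2_def \<mu>_def .
qed

lemma modReLU_extracts_Re:
  assumes "0 < r" "cmod w \<le> R" "r + R \<le> C" "2 * R \<le> C"
  defines "\<kappa> \<equiv> of_real ((r / C - 1) * (2 * C / r))"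
  shows "cmod ((1 - \<kappa>) * modReLU (-r) (of_real C + w) + \<kappa> * modReLU (-r) (of_real (2 * C) + w)
    + of_real r - (1 + \<kappa>) * of_real C - of_real (Re w)) \<le> 11 * R\<^sup>2 / C"
proof -
  define z1 where "z1 = modReLU (-r) (of_real C + w)"
  define z2 where "z2 = modReLU (-r) (of_real (2 * C) + w)"
  define \<mu> :: complex where "\<mu> = of_real (2 * C / r)"
  obtain E1 E2 where z1: "z1 = of_real C + w - of_real r * (1 + \<i> * of_real (Im w / C) + E1)"
    and I: "\<mu> * (z2 - z1 - of_real C) = \<i> * of_real (Im w) + of_real (2 * C) * (E1 - E2)"
    and E: "cmod E1 \<le> 3 * R\<^sup>2 / C\<^sup>2" "cmod (E1 - E2) \<le> 15 / 4 * R\<^sup>2 / C\<^sup>2"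
    unfolding z1_def z2_def \<mu>_def by (rule modReLU_two_shifts[OF assms(1-4)])
  have R: "0 \<le> R" using assms(2) norm_ge_zero order_trans by blast
  have C: "0 < C" using assms(1,3) R by linarith
  have "(1 - \<kappa>) * z1 + \<kappa> * z2 + of_real r - (1 + \<kappa>) * of_real C - of_real (Re w)
      = z1 - of_real C + of_real r - of_real (Re w) + of_real (r / C - 1) * (\<mu> * (z2 - z1 - of_real C))"
  proof -
    have "\<kappa> = of_real (r / C - 1) * \<mu>" by (simp add: \<kappa>_def \<mu>_def)
    moreover have "(1 - a * \<mu>) * z1 + a * \<mu> * z2 + of_real r - (1 + a * \<mu>) * of_real C - of_real (Re w)
      = z1 - of_real C + of_real r - of_real (Re w) + a * (\<mu> * (z2 - z1 - of_real C))" for a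
      by (simp add: algebra_simps)
    ultimately show ?thesis by (simp only:)
  qed
  also have "\<dots> = - (of_real r * E1) + of_real (2 * r - 2 * C) * (E1 - E2)"
  proof -
    obtain a t where w: "w = of_real a + \<i> * of_real t" using complex_eq by blast
    show ?thesis using C by (simp only: I) (simp add: z1 w field_simps)
  qed
  finally have re: "(1 - \<kappa>) * z1 + \<kappa> * z2 + of_real r - (1 + \<kappa>) * of_real C - of_real (Re w)
      = - (of_real r * E1) + of_real (2 * r - 2 * C) * (E1 - E2)" .
  have "\<bar>r\<bar> = r" "\<bar>2 * r - 2 * C\<bar> = 2 * C - 2 * r" using assms(1,3) R by auto
  with norm_triangle_ineq[of "- (of_real r * E1)" "of_real (2 * r - 2 * C) * (E1 - E2)"]
  have "cmod (- (of_real r * E1) + of_real (2 * r - 2 * C) * (E1 - E2))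
      \<le> r * cmod E1 + (2 * C - 2 * r) * cmod (E1 - E2)"
    by (simp only: norm_mult norm_minus_cancel norm_of_real)
  also have "\<dots> \<le> C * (3 * R\<^sup>2 / C\<^sup>2) + (2 * C) * (15 / 4 * R\<^sup>2 / C\<^sup>2)"
    using E assms(1,3) R by (intro add_mono mult_mono) auto
  also have "\<dots> \<le> 11 * R\<^sup>2 / C" using C by (simp add: power2_eq_square field_simps)
  finally show ?thesis using re unfolding z1_def z2_def by (simp only:)
qed

lemma in_affine_copies:
  assumes "2 * n \<le> W"
  shows "\<exists>A c. \<forall>x k. k < 2 * n \<longrightarrow> in_affine W A c x k = of_real (s k) + x $ en (k div 2)"
proof -
  define A :: "nat \<Rightarrow> 'a \<Rightarrow> complex" where "A k q = (if q = en (k div 2) then 1 else 0)" for k q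
  have "(\<Sum>q\<in>UNIV. A k q * x $ q) = x $ en (k div 2)" for k x
    by (simp add: A_def if_distrib[of "\<lambda>a. a * _"] sum.delta cong: if_cong)
  then show ?thesis using assms by (intro exI[of _ A] exI[of _ "\<lambda>k. of_real (s k)"]) (simp add: in_affine_def)
qed

lemma hid_affine_pairs:
  assumes "2 * n \<le> W"
  shows "\<exists>A. \<forall>z i. i < W \<longrightarrow> hid_affine W A c z i
    = (if i < 2 * n then a i * z (2 * (i div 2)) + b i * z (2 * (i div 2) + 1) else 0) + c i"
proof -
  define A where "A i k = (if i < 2 * n then (if k = 2 * (i div 2) then a i
    else if k = 2 * (i div 2) + 1 then b i else 0) else 0)" for i k :: nat
  have "(\<Sum>k<W. A i k * z k) = a i * z (2 * (i div 2)) + b i * z (2 * (i div 2) + 1)" if "i < 2 * n" for i z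
  proof -
    have "2 * (i div 2) < W" "2 * (i div 2) + 1 < W" using that assms by presburger+
    then show ?thesis using that sum_two_points[of "2 * (i div 2)" W "2 * (i div 2) + 1"] by (simp add: A_def)
  qed
  then show ?thesis by (intro exI[of _ A]) (simp add: hid_affine_def A_def)
qed

lemma input_network_error:
  assumes "0 < r" "2 * n \<le> W" "0 \<le> R" "\<forall>x\<in>K. norm x \<le> R" "r + R \<le> C" "2 * R \<le> C"
  shows "\<exists>g\<in>NN_pre (modReLU (-r)) W. \<forall>x\<in>K. \<forall>i<W.
    cmod (g x i - encode W B r {} (real_coords n en x) i) \<le> 11 * R\<^sup>2 / C"
proof -
  have C: "0 < C" using assms(1,3,5) by linarith
  define \<mu> :: complex where "\<mu> = of_real (2 * C / r)"
  define \<kappa> :: complex where "\<kappa> = of_real ((r / C - 1) * (2 * C / r))"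
  define a where "a i = (if even i then 1 - \<kappa> else \<i> * \<mu>)" for i :: nat
  define b where "b i = (if even i then \<kappa> else - \<i> * \<mu>)" for i :: nat
  define c where "c i = (if i < 2 * n then (if even i then of_real r - (1 + \<kappa>) * of_real C
    else \<i> * \<mu> * of_real C) else 0) + of_real (B + r)" for i :: nat
  obtain A0 c0 where first: "\<forall>x k. k < 2 * n \<longrightarrow>
      in_affine W A0 c0 x k = of_real (if even k then C else 2 * C) + x $ en (k div 2)"
    using in_affine_copies[OF assms(2), of "\<lambda>k. if even k then C else 2 * C" en] by blast
  obtain A1 where second: "\<forall>z i. i < W \<longrightarrow> hid_affine W A1 c z i
      = (if i < 2 * n then a i * z (2 * (i div 2)) + b i * z (2 * (i div 2) + 1) else 0) + c i"
    using hid_affine_pairs[OF assms(2)] by blast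
  show ?thesis
  proof (intro bexI ballI allI impI)
    show "hid_affine W A1 c \<circ> act (modReLU (-r)) \<circ> in_affine W A0 c0 \<in> NN_pre (modReLU (-r)) W"
      by (intro NN_pre.step NN_pre.first)
    fix x i assume x: "x \<in> K" and i: "i < W"
    define w where "w = x $ en (i div 2)"
    have "cmod w \<le> norm x" unfolding w_def by (rule Finite_Cartesian_Product.norm_nth_le)
    then have w: "cmod w \<le> R" using assms(4) x by auto
    have "2 * (i div 2) < 2 * n \<and> 2 * (i div 2) + 1 < 2 * n" if "i < 2 * n" using that by presburger
    then have g: "(hid_affine W A1 c \<circ> act (modReLU (-r)) \<circ> in_affine W A0 c0) x i
        = (if i < 2 * n then a i * modReLU (-r) (of_real C + w) + b i * modReLU (-r) (of_real (2 * C) + w)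
          else 0) + c i"
      using i first second by (auto simp: act_def w_def add.commute)
    have enc: "encode W B r {} (real_coords n en x) i
        = of_real ((if i < 2 * n then (if even i then Re w else Im w) else 0) + B + r)"
      using i by (simp add: encode_def real_coords_def w_def)
    have "8 * R\<^sup>2 / C \<le> 11 * R\<^sup>2 / C" using C by (simp add: divide_right_mono)
    then show "cmod ((hid_affine W A1 c \<circ> act (modReLU (-r)) \<circ> in_affine W A0 c0) x i
        - encode W B r {} (real_coords n en x) i) \<le> 11 * R\<^sup>2 / C"
      using modReLU_extracts_Re[OF assms(1) w assms(5,6)] modReLU_extracts_Im[OF assms(1) w assms(5,6)] C
      unfolding g enc \<kappa>_def[symmetric] \<mu>_def[symmetric]
      by (cases "i < 2 * n"; cases "even i") (simp_all add: a_def b_def c_def algebra_simps)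
  qed
qed

lemma approximable_input:
  assumes "0 < r" "2 * n \<le> W" "\<forall>x\<in>K. norm x \<le> R"
  shows "approximable (modReLU (-r)) W K (\<lambda>x. encode W B r {} (real_coords n en x))"
  unfolding approximable_def
proof (intro allI impI)
  fix e :: real assume e: "0 < e"
  define R' where "R' = max R 0"
  define C where "C = r + 2 * R' + 11 * W * R'\<^sup>2 / e + 1"
  have R': "0 \<le> R'" "\<forall>x\<in>K. norm x \<le> R'" using assms(3) by (auto simp: R'_def intro: order_trans)
  have "0 \<le> 11 * W * R'\<^sup>2 / e" using e by simp
  then have C: "r + R' \<le> C" "2 * R' \<le> C" "11 * W * R'\<^sup>2 / e < C"
    using assms(1) R' unfolding C_def by linarith+
  then have small: "W * (11 * R'\<^sup>2 / C) < e"
    using assms(1) e by (simp add: field_simps R'_def)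
  obtain g where g: "g \<in> NN_pre (modReLU (-r)) W" "\<forall>x\<in>K. \<forall>i<W.
      cmod (g x i - encode W B r {} (real_coords n en x) i) \<le> 11 * R'\<^sup>2 / C"
    using input_network_error[OF assms(1,2) R' C(1,2)] by blast
  have "hidden_dist W (g x) (encode W B r {} (real_coords n en x)) < e" if "x \<in> K" for x
    using sum_mono[of "{..<W}"] g(2) that small unfolding hidden_dist_def
    by (smt (verit) lessThan_iff sum_constant card_lessThan)
  then show "\<exists>g\<in>NN_pre (modReLU (-r)) W. \<forall>x\<in>K. hidden_dist W (g x) (encode W B r {} (real_coords n en x)) < e"
    using g(1) by blast
qed

section \<open>Approximating continuous functions by maxima of cones\<close>

lemma max_cones_near:
  assumes "x \<in> K" "a \<le> \<phi> x" "set cs \<subseteq> K" "c\<^sub>0 \<in> set cs" "dist c\<^sub>0 x < \<delta>'" "\<delta>' \<le> \<delta>"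
    and "0 \<le> L" "L * \<delta>' \<le> e / 2"
    and \<phi>: "\<forall>c\<in>K. \<bar>\<phi> c\<bar> \<le> M" "\<forall>c\<in>K. dist c x < \<delta> \<longrightarrow> \<bar>\<phi> c - \<phi> x\<bar> < e / 2"
    and \<rho>: "\<forall>c\<in>K. 0 \<le> \<rho> x c \<and> \<rho> x c \<le> dist x c" "\<forall>c\<in>K. \<delta> \<le> dist c x \<longrightarrow> 2 * M \<le> L * \<rho> x c"
  shows "\<bar>max_cones a \<phi> L \<rho> cs x - \<phi> x\<bar> \<le> e"
proof -
  have c\<^sub>0: "c\<^sub>0 \<in> K" using assms(3,4) by auto
  have "\<bar>\<phi> c\<^sub>0 - \<phi> x\<bar> < e / 2" using \<phi>(2) c\<^sub>0 assms(5,6) by auto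
  then have e: "0 < e" by linarith
  have "max_cones a \<phi> L \<rho> cs x \<le> \<phi> x + e / 2"
  proof (rule max_cones_le)
    show "a \<le> \<phi> x + e / 2" using assms(2) e by simp
    fix c assume "c \<in> set cs"
    then have c: "c \<in> K" using assms(3) by auto
    show "\<phi> c - L * \<rho> x c \<le> \<phi> x + e / 2"
    proof (cases "dist c x < \<delta>")
      case True
      then have "\<bar>\<phi> c - \<phi> x\<bar> < e / 2" using \<phi>(2) c by blast
      moreover have "0 \<le> L * \<rho> x c" using assms(7) \<rho>(1) c by simp
      ultimately show ?thesis by (simp only: abs_less_iff) linarith
    next
      case False
      then have "2 * M \<le> L * \<rho> x c" using \<rho>(2) c by simp
      moreover have "\<phi> c \<le> M" "- \<phi> x \<le> M" using \<phi>(1) assms(1) c abs_le_D1 abs_le_D2 by blast+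
      ultimately show ?thesis using e by linarith
    qed
  qed
  moreover have "\<phi> x - e \<le> \<phi> c\<^sub>0 - L * \<rho> x c\<^sub>0"
  proof -
    have "\<rho> x c\<^sub>0 \<le> dist x c\<^sub>0" using \<rho>(1) c\<^sub>0 by blast
    then have "\<rho> x c\<^sub>0 \<le> \<delta>'" using assms(5) by (simp add: dist_commute)
    then have "L * \<rho> x c\<^sub>0 \<le> e / 2" using assms(7,8) mult_left_mono order_trans by blast
    then show ?thesis using \<open>\<bar>\<phi> c\<^sub>0 - \<phi> x\<bar> < e / 2\<close> by (simp only: abs_less_iff) linarith
  qed
  then have "\<phi> x - e \<le> max_cones a \<phi> L \<rho> cs x" using max_cones_ge[OF assms(4), of \<phi> L \<rho> x a] by linarith
  ultimately show ?thesis using e by linarith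
qed

lemma continuous_approx_by_max_cones:
  fixes \<phi> :: "'a::metric_space \<Rightarrow> real" and \<rho> :: "'a \<Rightarrow> 'a \<Rightarrow> real"
  assumes "compact K" "continuous_on K \<phi>" "0 < e" "0 < D"
    and "\<forall>x\<in>K. \<forall>c\<in>K. \<rho> x c \<le> dist x c" "\<forall>x\<in>K. \<forall>c\<in>K. dist x c \<le> D * \<rho> x c"
  obtains L cs where "0 \<le> L" "set cs \<subseteq> K"
    "\<forall>x\<in>K. \<forall>a\<le>\<phi> x. \<bar>max_cones a \<phi> L \<rho> cs x - \<phi> x\<bar> \<le> e"
proof -
  obtain M where "0 < M" "\<forall>y\<in>\<phi> ` K. norm y \<le> M"
    using compact_imp_bounded[OF compact_continuous_image[OF assms(2,1)]] bounded_pos by blast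
  then have M: "0 < M" "\<forall>x\<in>K. \<bar>\<phi> x\<bar> \<le> M" by auto
  have "\<exists>\<delta>>0. \<forall>x\<in>K. \<forall>c\<in>K. dist c x < \<delta> \<longrightarrow> dist (\<phi> c) (\<phi> x) < e / 2"
    using compact_uniformly_continuous[OF assms(2,1)] half_gt_zero[OF assms(3)]
    unfolding uniformly_continuous_on_def by blast
  then obtain \<delta> where \<delta>: "0 < \<delta>" "\<forall>x\<in>K. \<forall>c\<in>K. dist c x < \<delta> \<longrightarrow> \<bar>\<phi> c - \<phi> x\<bar> < e / 2"
    by (auto simp: dist_real_def)
  \<comment> \<open>a cone of this slope drops below -M outside the \<delta>-ball around its apex\<close>
  define L where "L = 2 * M * D / \<delta>"
  have L: "0 < L" using M \<delta> assms(4) by (simp add: L_def)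
  define \<delta>' where "\<delta>' = min \<delta> (e / (2 * L))"
  have "0 < \<delta>'" using \<delta> L assms(3) by (simp add: \<delta>'_def)
  with seq_compact_imp_totally_bounded[OF compact_imp_seq_compact[OF assms(1)]]
  obtain C where C: "finite C" "C \<subseteq> K" "K \<subseteq> (\<Union>c\<in>C. ball c \<delta>')"
    by meson
  obtain cs where "set cs = C" using finite_list[OF C(1)] by blast
  with C have cs: "set cs \<subseteq> K" "K \<subseteq> (\<Union>c\<in>set cs. ball c \<delta>')" by auto
  have "\<bar>max_cones a \<phi> L \<rho> cs x - \<phi> x\<bar> \<le> e" if x: "x \<in> K" and a: "a \<le> \<phi> x" for x a
  proof -
    obtain c\<^sub>0 where c\<^sub>0: "c\<^sub>0 \<in> set cs" "dist c\<^sub>0 x < \<delta>'" using cs(2) x by (auto simp: subset_iff)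
    have "L * \<delta>' \<le> L * (e / (2 * L))" using L by (intro mult_left_mono) (auto simp: \<delta>'_def)
    then have "L * \<delta>' \<le> e / 2" using L by simp
    moreover have "\<forall>c\<in>K. 0 \<le> \<rho> x c \<and> \<rho> x c \<le> dist x c"
      using assms(4-6) x by (metis order_trans zero_le_dist zero_le_mult_iff not_less)
    moreover have "\<forall>c\<in>K. \<delta> \<le> dist c x \<longrightarrow> 2 * M \<le> L * \<rho> x c"
    proof (intro ballI impI)
      fix c assume "c \<in> K" "\<delta> \<le> dist c x"
      moreover have "dist x c \<le> D * \<rho> x c" using assms(6) x \<open>c \<in> K\<close> by blast
      ultimately have "\<delta> \<le> D * \<rho> x c" by (simp add: dist_commute)
      then have "2 * M * \<delta> \<le> 2 * M * (D * \<rho> x c)" using M(1) by (intro mult_left_mono) auto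
      then show "2 * M \<le> L * \<rho> x c" using \<delta>(1) by (simp add: L_def field_simps)
    qed
    ultimately show ?thesis
      using M(2) \<delta>(2) x a cs(1) c\<^sub>0 L
      by (intro max_cones_near[where K = K and \<delta> = \<delta> and \<delta>' = \<delta>' and M = M]) (auto simp: \<delta>'_def)
  qed
  then show ?thesis using that[of L cs] L cs(1) by auto
qed

lemma out_affine_readout:
  assumes "0 < r" "0 < B" "\<forall>k<W. \<bar>u k\<bar> \<le> B" "\<forall>k. p k + 1 < W"
  shows "out_affine W (\<lambda>k j. if j = p k then 1 else if j = p k + 1 then \<i> else 0) (\<lambda>k. - of_real B * (1 + \<i>))
      (act (modReLU (-r)) (encode W B r {} u)) = (\<chi> k. Complex (u (p k)) (u (p k + 1)))"
proof -
  have z: "act (modReLU (-r)) (encode W B r {} u) j = of_real (u j + B)" if "j < W" for j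
    using modReLU_encode[OF assms(1,2), of u j "{}"] assms(3) that by (simp add: act_def encode_def)
  show ?thesis
  proof (rule vec_eq_iff[THEN iffD2], intro allI)
    fix k
    have pk: "p k < W" "p k + 1 < W" "p k \<noteq> p k + 1" using assms(4) by (auto intro: Suc_lessD)
    have "(\<Sum>j<W. (if j = p k then 1 else if j = p k + 1 then \<i> else 0)
        * act (modReLU (-r)) (encode W B r {} u) j)
      = 1 * act (modReLU (-r)) (encode W B r {} u) (p k) + \<i> * act (modReLU (-r)) (encode W B r {} u) (p k + 1)"
      by (rule sum_two_points[OF pk])
    also have "\<dots> = of_real (u (p k) + B) + \<i> * of_real (u (p k + 1) + B)" using z pk by simp
    finally show "out_affine W (\<lambda>k j. if j = p k then 1 else if j = p k + 1 then \<i> else 0)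
        (\<lambda>k. - of_real B * (1 + \<i>)) (act (modReLU (-r)) (encode W B r {} u)) $ k
      = (\<chi> k. Complex (u (p k)) (u (p k + 1))) $ k"
      unfolding out_affine_def by (simp add: complex_eq_iff)
  qed
qed

definition complex_readout :: "nat \<Rightarrow> (nat \<Rightarrow> 'm::finite) \<Rightarrow> nat \<Rightarrow> (nat \<Rightarrow> real) \<Rightarrow> complex^'m" where
  "complex_readout m em N u =
     (\<chi> k. Complex (u (N + 2 * inv_into {..<m} em k)) (u (N + 2 * inv_into {..<m} em k + 1)))"

lemma real_coords_complex_readout:
  assumes "bij_betw em {..<m} UNIV" "i < 2 * m"
  shows "real_coords m em (complex_readout m em N u) i = u (N + i)"
proof -
  have "inv_into {..<m} em (em (i div 2)) = i div 2"
    using bij_betw_inv_into_left[OF assms(1)] assms(2) by simp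
  then show ?thesis using assms(2) by (auto simp: real_coords_def complex_readout_def elim!: evenE oddE)
qed

lemma out_affine_complex_readout:
  assumes "0 < r" "0 < B" "bij_betw em {..<m} (UNIV :: 'm::finite set)" "N + 2 * m \<le> W"
  shows "\<exists>A c. \<forall>u. (\<forall>k<W. \<bar>u k\<bar> \<le> B) \<longrightarrow>
    out_affine W A c (act (modReLU (-r)) (encode W B r {} u)) = (complex_readout m em N u :: complex^'m)"
proof (intro exI allI impI)
  define p where "p k = N + 2 * inv_into {..<m} em k" for k
  have p: "\<forall>k. p k + 1 < W"
  proof
    fix k
    have "inv_into {..<m} em k < m" using bij_betw_inv_into[OF assms(3)] by (auto simp: bij_betw_def)
    then show "p k + 1 < W" using assms(4) unfolding p_def by linarith
  qed
  fix u :: "nat \<Rightarrow> real" assume "\<forall>k<W. \<bar>u k\<bar> \<le> B"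
  from out_affine_readout[OF assms(1,2) this p]
  show "out_affine W (\<lambda>k j. if j = p k then 1 else if j = p k + 1 then \<i> else 0) (\<lambda>k. - of_real B * (1 + \<i>))
      (act (modReLU (-r)) (encode W B r {} u)) = complex_readout m em N u"
    by (simp add: complex_readout_def p_def)
qed

context cone_program
begin

lemma computable_real_coords:
  assumes "2 * n \<le> W" "\<forall>x\<in>K. norm x \<le> B0"
  shows "computable (real_coords n en)"
  unfolding computable_def
proof
  show "approximable (modReLU (-r)) W K (\<lambda>x. enc {} (real_coords n en x))"
    by (rule approximable_input[OF r_pos assms])
  show "\<forall>x\<in>K. \<forall>k<W. \<bar>real_coords n en x k\<bar> \<le> B0"
    using assms(2) abs_real_coords_le order_trans by blast
qed

lemma exists_net_near_readout:
  fixes g :: "complex^'n \<Rightarrow> complex^'m::finite"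
  assumes "computable v" "bij_betw em {..<m} (UNIV :: 'm set)" "N + 2 * m \<le> W" "0 \<le> d" "0 < e"
    and "\<forall>x\<in>K. \<forall>i<2 * m. \<bar>v x (N + i) - real_coords m em (g x) i\<bar> \<le> d"
  shows "\<exists>f\<in>(NN (modReLU (-r)) W :: (complex^'n \<Rightarrow> complex^'m) set).
    \<forall>x\<in>K. norm (f x - g x) < e + 2 * real m * d"
proof -
  let ?w = "\<lambda>x. complex_readout m em N (v x) :: complex^'m"
  obtain A c where readout: "\<forall>u. (\<forall>k<W. \<bar>u k\<bar> \<le> 2 * B0) \<longrightarrow>
      out_affine W A c (act (modReLU (-r)) (enc {} u)) = (complex_readout m em N u :: complex^'m)"
    using out_affine_complex_readout[OF r_pos _ assms(2,3), of "2 * B0"] B0_pos by auto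
  obtain f where f: "f \<in> (NN (modReLU (-r)) W :: (complex^'n \<Rightarrow> complex^'m) set)"
    "\<forall>x\<in>K. norm (f x - out_affine W A c (act (modReLU (-r)) (enc {} (v x)))) < e"
    using approximable_output[OF modReLU_lipschitz[OF r_pos] _ assms(5)] assms(1)
    unfolding computable_def by blast
  have close: "norm (f x - g x) < e + 2 * real m * d" if x: "x \<in> K" for x
  proof -
    have "\<bar>v x k\<bar> \<le> 2 * B0" if "k < W" for k
    proof -
      have "\<bar>v x k\<bar> \<le> B0" using assms(1) x that by (simp add: computable_def)
      then show ?thesis using B0_pos by linarith
    qed
    then have "out_affine W A c (act (modReLU (-r)) (enc {} (v x))) = ?w x" using readout by blast
    then have "norm (f x - ?w x) < e" using f(2) x by fastforce
    moreover have "sup_dist (2 * m) (real_coords m em (?w x)) (real_coords m em (g x)) \<le> d"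
      using assms(4,6) x by (intro sup_dist_le) (auto simp: real_coords_complex_readout[OF assms(2)])
    then have "2 * real m * sup_dist (2 * m) (real_coords m em (?w x)) (real_coords m em (g x))
        \<le> 2 * real m * d"
      by (intro mult_left_mono) auto
    then have "dist (?w x) (g x) \<le> 2 * real m * d"
      using dist_le_sup_dist_real_coords[OF assms(2), of "?w x" "g x"] by linarith
    then have "norm (?w x - g x) \<le> 2 * real m * d" by (simp only: dist_norm)
    ultimately show ?thesis using norm_triangle_ineq[of "f x - ?w x" "?w x - g x"] by simp
  qed
  show ?thesis by (intro bexI[OF _ f(1)] ballI close)
qed

end

lemma continuous_on_real_coords: "continuous_on K g \<Longrightarrow> continuous_on K (\<lambda>x. real_coords n en (g x) q)"
  unfolding real_coords_def by (cases "q < 2 * n") (auto intro!: continuous_intros)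

lemma exists_cone_data:
  fixes g :: "complex^'n::finite \<Rightarrow> complex^'m::finite"
  assumes "compact K" "continuous_on K g" "bij_betw en {..<n} (UNIV :: 'n set)" "0 < n" "0 < e"
  defines "\<rho> \<equiv> \<lambda>x c. sup_dist (2 * n) (real_coords n en x) (real_coords n en c)"
  obtains B0 L cs where "0 < B0" "\<forall>x\<in>K. norm x \<le> B0" "\<forall>q<2 * m. 0 \<le> L q"
    "\<forall>q<2 * m. \<forall>x\<in>K. \<forall>c\<in>set (cs q). \<bar>real_coords m em (g c) q\<bar> + L q * \<rho> x c \<le> B0"
    "\<forall>q<2 * m. \<forall>x\<in>K. \<bar>max_cones (-B0) (\<lambda>c. real_coords m em (g c) q) (L q) \<rho> (cs q) x
       - real_coords m em (g x) q\<bar> \<le> e"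
proof -
  have \<rho>: "\<forall>x\<in>K. \<forall>c\<in>K. \<rho> x c \<le> dist x c" "\<forall>x\<in>K. \<forall>c\<in>K. dist x c \<le> (2 * real n) * \<rho> x c"
    unfolding \<rho>_def using sup_dist_real_coords_le dist_le_sup_dist_real_coords[OF assms(3)] by auto
  have "\<forall>q. \<exists>L cs. 0 \<le> L \<and> set cs \<subseteq> K \<and> (\<forall>x\<in>K. \<forall>a\<le>real_coords m em (g x) q.
      \<bar>max_cones a (\<lambda>c. real_coords m em (g c) q) L \<rho> cs x - real_coords m em (g x) q\<bar> \<le> e)"
    using continuous_approx_by_max_cones[OF assms(1) continuous_on_real_coords[OF assms(2)] assms(5) _ \<rho>]
      assms(4) by (metis of_nat_0_less_iff zero_less_mult_iff zero_less_numeral)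
  then obtain L cs where cones: "\<forall>q. 0 \<le> L q \<and> set (cs q) \<subseteq> K \<and> (\<forall>x\<in>K. \<forall>a\<le>real_coords m em (g x) q.
      \<bar>max_cones a (\<lambda>c. real_coords m em (g c) q) (L q) \<rho> (cs q) x - real_coords m em (g x) q\<bar> \<le> e)"
    by metis
  obtain R where R: "0 < R" "\<forall>x\<in>K. norm x \<le> R"
    using compact_imp_bounded[OF assms(1)] bounded_pos by blast
  obtain M where M: "0 < M" "\<forall>y\<in>g ` K. norm y \<le> M"
    using compact_imp_bounded[OF compact_continuous_image[OF assms(2,1)]] bounded_pos by blast
  \<comment> \<open>every cone value and every input coordinate lies in [-B0, B0]\<close>
  define B0 where "B0 = M + R + 2 * R * (\<Sum>q<2 * m. L q) + 1"
  have target: "\<bar>real_coords m em (g x) q\<bar> \<le> M" if "x \<in> K" for x q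
    using abs_real_coords_le[of m em "g x" q] M(2) that by fastforce
  have bound: "\<bar>real_coords m em (g c) q\<bar> + L q * \<rho> x c \<le> B0" if "q < 2 * m" "x \<in> K" "c \<in> set (cs q)" for q x c
  proof -
    have c: "c \<in> K" using cones that(3) by auto
    have "\<rho> x c \<le> dist x c" using \<rho>(1) that(2) c by blast
    moreover have "dist x c \<le> norm x + norm c" by (simp add: dist_norm norm_triangle_ineq4)
    moreover have "norm x \<le> R" "norm c \<le> R" using R(2) that(2) c by auto
    ultimately have "\<rho> x c \<le> 2 * R" by linarith
    then have "L q * \<rho> x c \<le> L q * (2 * R)" using cones by (simp add: mult_left_mono)
    also have "\<dots> \<le> (\<Sum>q<2 * m. L q) * (2 * R)"
      using cones that(1) R(1) by (intro mult_right_mono member_le_sum) auto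
    finally show ?thesis using target[OF c, of q] R(1) by (simp add: B0_def algebra_simps)
  qed
  have "0 \<le> 2 * R * (\<Sum>q<2 * m. L q)" using cones R(1) by (simp add: sum_nonneg)
  then have B0: "R < B0" "M < B0" using M(1) R(1) by (simp_all add: B0_def)
  have "- B0 \<le> real_coords m em (g x) q" if "x \<in> K" for x q
    using target[OF that, of q] B0(2) by linarith
  then have "\<forall>q<2 * m. \<forall>x\<in>K. \<bar>max_cones (-B0) (\<lambda>c. real_coords m em (g c) q) (L q) \<rho> (cs q) x
       - real_coords m em (g x) q\<bar> \<le> e"
    using cones by blast
  moreover have "0 < B0" "\<forall>x\<in>K. norm x \<le> B0" using B0(1) R by (auto intro: order_trans)
  ultimately show ?thesis using that[of B0 L cs] cones bound by auto
qed

lemma ex_bij_betw_lessThan_card: "\<exists>f. bij_betw f {..<CARD('a::finite)} (UNIV :: 'a set)"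
  using ex_bij_betw_nat_finite[of "UNIV :: 'a set"] by (simp add: atLeast0LessThan)

lemma NN_modReLU_approximates_on_compact:
  fixes g :: "complex^'n::finite \<Rightarrow> complex^'m::finite"
  assumes "b < 0" "compact K" "continuous_on K g" "0 < \<epsilon>"
  shows "\<exists>f\<in>(NN (modReLU b) (2 * CARD('n) + 2 * CARD('m) + 1) :: (complex^'n \<Rightarrow> complex^'m) set).
    \<forall>x\<in>K. norm (f x - g x) < \<epsilon>"
proof -
  define n m where "n = CARD('n)" and "m = CARD('m)"
  obtain en :: "nat \<Rightarrow> 'n" and em :: "nat \<Rightarrow> 'm"
    where en: "bij_betw en {..<n} UNIV" and em: "bij_betw em {..<m} UNIV"
    using ex_bij_betw_lessThan_card[where 'a = 'n] ex_bij_betw_lessThan_card[where 'a = 'm]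
    unfolding n_def m_def by blast
  have "0 < n" "0 < m" "0 < \<epsilon> / (4 * m)" using assms(4) by (simp_all add: n_def m_def)
  obtain B0 L cs where B0: "0 < B0" "\<forall>x\<in>K. norm x \<le> B0" "\<forall>q<2 * m. 0 \<le> L q"
    "\<forall>q<2 * m. \<forall>x\<in>K. \<forall>c\<in>set (cs q). \<bar>real_coords m em (g c) q\<bar>
       + L q * sup_dist (2 * n) (real_coords n en x) (real_coords n en c) \<le> B0"
    "\<forall>q<2 * m. \<forall>x\<in>K. \<bar>max_cones (-B0) (\<lambda>c. real_coords m em (g c) q) (L q)
       (\<lambda>x c. sup_dist (2 * n) (real_coords n en x) (real_coords n en c)) (cs q) x
       - real_coords m em (g x) q\<bar> \<le> \<epsilon> / (4 * m)"
    by (rule exists_cone_data[OF assms(2,3) en \<open>0 < n\<close> \<open>0 < \<epsilon> / (4 * m)\<close>])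
  interpret cone_program "-b" B0 "2 * n + 2 * m + 1" "2 * n + 2 * m" "2 * n" K "real_coords n en"
    using assms(1) B0(1) by unfold_locales auto
  have "computable (real_coords n en)" using B0(2) by (intro computable_real_coords) auto
  then obtain v where v: "computable v" "\<forall>x\<in>K. \<forall>q<2 * m. v x (2 * n + q) = max_cones (-B0)
      (\<lambda>c. real_coords m em (g c) q) (L q) input_dist (cs q) x"
    using computable_outputs[OF _ _ order_refl B0(3,4)] by blast
  then have "\<forall>x\<in>K. \<forall>q<2 * m. \<bar>v x (2 * n + q) - real_coords m em (g x) q\<bar> \<le> \<epsilon> / (4 * m)"
    using B0(5) by simp
  from exists_net_near_readout[OF v(1) em le_add1 less_imp_le[OF \<open>0 < \<epsilon> / (4 * m)\<close>]
      half_gt_zero[OF assms(4)] this]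
  obtain f where "f \<in> (NN (modReLU (- (- b))) (2 * n + 2 * m + 1) :: (complex^'n \<Rightarrow> complex^'m) set)"
      "\<forall>x\<in>K. norm (f x - g x) < \<epsilon> / 2 + 2 * real m * (\<epsilon> / (4 * m))"
    by blast
  moreover have "\<epsilon> / 2 + 2 * real m * (\<epsilon> / (4 * m)) = \<epsilon>" using \<open>0 < m\<close> by simp
  ultimately show ?thesis unfolding n_def m_def by auto
qed

theorem mainTheorem8:
  fixes b :: real
  assumes "b < 0"
  shows "universal (NN (modReLU b) (2 * CARD('n::finite) + 2 * CARD('m::finite) + 1)
           :: (complex^'n \<Rightarrow> complex^'m) set)"
  unfolding universal_def
  by (intro allI impI NN_modReLU_approximates_on_compact[OF assms])
    (auto intro: continuous_on_subset)

end
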